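(* Let $R$ be a commutative ring, $\mathcal{A}=\{L_1,\dots,L_n\}$ an arrangement of affine lines in $\mathbb{C}^2$, and $\xi=a_1e_1+\dots+a_ne_n\in A^1_R(\mathcal{A})$. If $\sum_{i=1}^n a_i\in R^\times$, then the natural map $\operatorname{Ker}\big(A^1_R(\mathcal{A})_0\xrightarrow{\xi\wedge}A^2_R(\mathcal{A})\big)\to H^1(A^\bullet_R(\mathcal{A}),\xi)$ is an isomorphism; in particular $H^1(A^\bullet_R(\mathcal{A}),\xi)\cong\operatorname{Ker}\big(A^1_R(\mathcal{A})_0\xrightarrow{\xi\wedge}A^2_R(\mathcal{A})\big)$.
   Context: The Orlik–Solomon algebra $A^*_R(\mathcal{A})$ of an arrangement $\mathcal{A}=\{L_1,\dots,L_n\}$ of affine lines in $\mathbb{C}^2$ over a commutative ring $R$ is the graded $R$-algebra with $A^0_R=R$, $A^1_R=\bigoplus_{i=1}^n R e_i$, $A^2_R=\bigwedge^2 A^1_R/I$ where $I$ is the $R$-submodule generated by (i) $e_i\wedge e_j$ for each pair of parallel lines $L_i\parallel L_j$ and (ii) $e_i\wedge e_j-e_i\wedge e_k+e_j\wedge e_k$ for each triple of lines with $L_i\cap L_j\cap L_k\neq\emptyset$, and $A^q_R=0$ for $q\ge3$. For $\xi\in A^1_R(\mathcal{A})$ the Aomoto complex $(A^\bullet_R(\mathcal{A}),\xi)$ has differential $x\mapsto\xi\wedge x$ (so $1\mapsto \xi$ in degree $0$). $A^1_R(\mathcal{A})_0=\{c_1e_1+\dots+c_ne_n\mid c_1+\dots+c_n=0\}$.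 *)

theory Defs
  imports Complex_Main
begin

type_synonym line = "complex \<times> complex \<times> complex"

definition is_line :: "line \<Rightarrow> bool" where
  "is_line l = (case l of (a, b, c) \<Rightarrow> (a, b) \<noteq> (0, 0))"

definition line_points :: "line \<Rightarrow> (complex \<times> complex) set" where
  "line_points l = (case l of (a, b, c) \<Rightarrow> {(x, y). a * x + b * y = c})"

definition line_arrangement :: "nat \<Rightarrow> (nat \<Rightarrow> line) \<Rightarrow> bool" where
  "line_arrangement n L =
     ((\<forall>i<n. is_line (L i)) \<and> inj_on (\<lambda>i. line_points (L i)) {..<n})"

definition parallel_lines :: "line \<Rightarrow> line \<Rightarrow> bool" where
  "parallel_lines l m = (line_points l \<noteq> line_points m \<and> line_points l \<inter> line_points m = {})"

text \<open>Degree 1 part: the free module R^n, vectors supported on indices < n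
  (e_i is the indicator of i).  Degree 2 of the exterior algebra: alternating
  coefficient functions w i j; the wedge of x and y has coefficients
  x i y j - x j y i.\<close>

definition A1 :: "nat \<Rightarrow> (nat \<Rightarrow> 'a::comm_ring_1) set" where
  "A1 n = {x. \<forall>i\<ge>n. x i = 0}"

definition evec :: "nat \<Rightarrow> nat \<Rightarrow> 'a::comm_ring_1" where
  "evec i = (\<lambda>k. if k = i then 1 else 0)"

definition wedge :: "(nat \<Rightarrow> 'a::comm_ring_1) \<Rightarrow> (nat \<Rightarrow> 'a) \<Rightarrow> nat \<Rightarrow> nat \<Rightarrow> 'a" where
  "wedge x y = (\<lambda>i j. x i * y j - x j * y i)"

definition ee :: "nat \<Rightarrow> nat \<Rightarrow> nat \<Rightarrow> nat \<Rightarrow> 'a::comm_ring_1" where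
  "ee i j = wedge (evec i) (evec j)"

inductive_set rspan :: "(nat \<Rightarrow> nat \<Rightarrow> 'a::comm_ring_1) set \<Rightarrow> (nat \<Rightarrow> nat \<Rightarrow> 'a) set"
  for S where
    zero: "(\<lambda>i j. 0) \<in> rspan S"
  | step: "g \<in> S \<Longrightarrow> w \<in> rspan S \<Longrightarrow> (\<lambda>i j. r * g i j + w i j) \<in> rspan S"

definition OS_gens :: "nat \<Rightarrow> (nat \<Rightarrow> line) \<Rightarrow> (nat \<Rightarrow> nat \<Rightarrow> 'a::comm_ring_1) set" where
  "OS_gens n L =
     {ee i j | i j. i < n \<and> j < n \<and> parallel_lines (L i) (L j)} \<union>
     {(\<lambda>p q. ee i j p q - ee i k p q + ee j k p q) | i j k.
        i < n \<and> j < n \<and> k < n \<and>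
        line_points (L i) \<inter> line_points (L j) \<inter> line_points (L k) \<noteq> {}}"

definition OS_ideal :: "nat \<Rightarrow> (nat \<Rightarrow> line) \<Rightarrow> (nat \<Rightarrow> nat \<Rightarrow> 'a::comm_ring_1) set" where
  "OS_ideal n L = rspan (OS_gens n L)"

text \<open>Z^1 = Ker(xi wedge : A^1 -> A^2): xi \<and> x vanishes in A^2 = Lambda^2 / I.\<close>
definition Z1 :: "nat \<Rightarrow> (nat \<Rightarrow> line) \<Rightarrow> (nat \<Rightarrow> 'a::comm_ring_1) \<Rightarrow> (nat \<Rightarrow> 'a) set" where
  "Z1 n L \<xi> = {x \<in> A1 n. wedge \<xi> x \<in> OS_ideal n L}"

definition Z1_0 :: "nat \<Rightarrow> (nat \<Rightarrow> line) \<Rightarrow> (nat \<Rightarrow> 'a::comm_ring_1) \<Rightarrow> (nat \<Rightarrow> 'a) set" where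
  "Z1_0 n L \<xi> = {x \<in> Z1 n L \<xi>. (\<Sum>i<n. x i) = 0}"

definition B1 :: "(nat \<Rightarrow> 'a::comm_ring_1) \<Rightarrow> (nat \<Rightarrow> 'a) set" where
  "B1 \<xi> = {(\<lambda>i. r * \<xi> i) | r. True}"

text \<open>The class of x in H^1 = Z^1 / B^1 (a coset).\<close>
definition H1_class :: "(nat \<Rightarrow> 'a::comm_ring_1) \<Rightarrow> (nat \<Rightarrow> 'a) \<Rightarrow> (nat \<Rightarrow> 'a) set" where
  "H1_class \<xi> x = {(\<lambda>i. x i + b i) | b. b \<in> B1 \<xi>}"

definition H1 :: "nat \<Rightarrow> (nat \<Rightarrow> line) \<Rightarrow> (nat \<Rightarrow> 'a::comm_ring_1) \<Rightarrow> (nat \<Rightarrow> 'a) set set" where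
  "H1 n L \<xi> = H1_class \<xi> ` Z1 n L \<xi>"

end

theory Submission
  imports Defs
begin

text \<open>Since \<open>\<xi> \<and> \<xi> = 0\<close>, the coboundaries \<open>r \<xi>\<close> lie in every \<open>Z\<^sup>1\<close>, so the class of a
  cocycle \<open>x\<close> is \<open>{x + r \<xi>}\<close>.  The augmentation \<open>\<epsilon>(x) = \<Sum> x\<^sub>i\<close> satisfies
  \<open>\<epsilon>(x + r \<xi>) = \<epsilon>(x) + r \<epsilon>(\<xi>)\<close>; when \<open>\<epsilon>(\<xi>)\<close> is a unit, exactly one \<open>r\<close> makes this
  vanish, so every class has a unique representative in \<open>A\<^sup>1\<^sub>0\<close>.  Nothing about the
  arrangement is used: the argument works for any ideal in degree 2.\<close>

lemma H1_class_eq: "H1_class a x = {(\<lambda>i. x i + r * a i) | r. True}"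
  unfolding H1_class_def B1_def by auto

lemma H1_class_add_scaled: "H1_class a (\<lambda>i. x i + c * a i) = H1_class a x"
  unfolding H1_class_eq
proof (intro set_eqI iffI)
  fix f assume "f \<in> {(\<lambda>i. (x i + c * a i) + r * a i) | r. True}"
  then obtain r where "f = (\<lambda>i. x i + (c + r) * a i)"
    by (auto simp: algebra_simps)
  then show "f \<in> {(\<lambda>i. x i + r * a i) | r. True}"
    by blast
next
  fix f assume "f \<in> {(\<lambda>i. x i + r * a i) | r. True}"
  then obtain r where "f = (\<lambda>i. (x i + c * a i) + (r - c) * a i)"
    by (auto simp: algebra_simps)
  then show "f \<in> {(\<lambda>i. (x i + c * a i) + r * a i) | r. True}"
    by blast
qed

lemma self_mem_H1_class: "x \<in> H1_class a x"
  unfolding H1_class_eq by (auto intro: exI[of _ 0])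

lemma sum_add_scaled:
  fixes x a :: "'i \<Rightarrow> 'a::semiring_0"
  shows "(\<Sum>i\<in>I. x i + c * a i) = (\<Sum>i\<in>I. x i) + c * (\<Sum>i\<in>I. a i)"
  by (simp add: sum.distrib sum_distrib_left)

lemma wedge_add_scaled_self: "wedge a (\<lambda>i. x i + c * a i) = wedge a x"
  unfolding wedge_def by (auto simp: algebra_simps)

lemma Z1_add_scaled:
  assumes "x \<in> Z1 n L a" and "a \<in> A1 n"
  shows "(\<lambda>i. x i + c * a i) \<in> Z1 n L a"
  using assms unfolding Z1_def A1_def by (simp add: wedge_add_scaled_self)

lemma inj_on_H1_class_Z1_0:
  assumes "(\<Sum>i<n. a i) dvd 1"
  shows "inj_on (H1_class a) (Z1_0 n L a)"
proof (rule inj_onI)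
  fix x y
  assume x: "x \<in> Z1_0 n L a" and y: "y \<in> Z1_0 n L a" and eq: "H1_class a x = H1_class a y"
  have "x \<in> H1_class a y"
    using eq self_mem_H1_class by metis
  then obtain r where r: "x = (\<lambda>i. y i + r * a i)"
    unfolding H1_class_eq by blast
  obtain u where u: "(\<Sum>i<n. a i) * u = 1"
    using assms by (metis dvdE)
  have "r * (\<Sum>i<n. a i) = 0"
    using x y sum_add_scaled[of y r a "{..<n}"] unfolding r Z1_0_def by simp
  moreover have "r = r * (\<Sum>i<n. a i) * u"
    using u by (simp add: mult.assoc)
  ultimately have "r = 0"
    by simp
  then show "x = y"
    using r by simp
qed

lemma H1_class_image_Z1_0:
  assumes "a \<in> A1 n" and "(\<Sum>i<n. a i) dvd 1"
  shows "H1_class a ` Z1_0 n L a = H1 n L a"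
proof
  show "H1_class a ` Z1_0 n L a \<subseteq> H1 n L a"
    unfolding H1_def Z1_0_def by blast
next
  show "H1 n L a \<subseteq> H1_class a ` Z1_0 n L a"
  proof
    fix C assume "C \<in> H1 n L a"
    then obtain z where z: "z \<in> Z1 n L a" and C: "C = H1_class a z"
      unfolding H1_def by blast
    obtain u where u: "(\<Sum>i<n. a i) * u = 1"
      using assms(2) by (metis dvdE)
    define x where "x = (\<lambda>i. z i + (- (\<Sum>i<n. z i) * u) * a i)"
    have "(\<Sum>i<n. x i) = (\<Sum>i<n. z i) - (\<Sum>i<n. z i) * ((\<Sum>i<n. a i) * u)"
      unfolding x_def sum_add_scaled by (simp add: algebra_simps)
    moreover have "x \<in> Z1 n L a"
      unfolding x_def by (rule Z1_add_scaled[OF z assms(1)])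
    ultimately have "x \<in> Z1_0 n L a"
      using u unfolding Z1_0_def by simp
    moreover have "H1_class a x = C"
      unfolding x_def C by (rule H1_class_add_scaled)
    ultimately show "C \<in> H1_class a ` Z1_0 n L a"
      by blast
  qed
qed

theorem lemma2p1:
  fixes n :: nat and L :: "nat \<Rightarrow> line" and a :: "nat \<Rightarrow> 'a::comm_ring_1"
  assumes "line_arrangement n L"
    and "a \<in> A1 n"
    and "(\<Sum>i<n. a i) dvd 1"
  shows "bij_betw (H1_class a) (Z1_0 n L a) (H1 n L a)"
  using inj_on_H1_class_Z1_0[OF assms(3)] H1_class_image_Z1_0[OF assms(2,3)]
  by (simp add: bij_betw_def)

end
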